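(* For every $\ell\in\mathbb N$ and $s=2^\ell$, the augmented Beneš network satisfies $\gamma(\check B_\ell)\ge s/3$.
   Context: Beneš network $B_\ell$ (inputs $v_1,\dots,v_s$, outputs $w_1,\dots,w_s$, $s=2^\ell$), defined recursively: $B_1=K_{2,2}$ with inputs $v_1,v_2$ on one side and outputs $w_1,w_2$ on the other. For $\ell\ge2$, take two vertex-disjoint copies $B^{\uparrow},B^{\downarrow}$ of $B_{\ell-1}$ with inputs/outputs $v_i^{\uparrow},w_i^{\uparrow}$ and $v_i^{\downarrow},w_i^{\downarrow}$ ($i\in[s/2]$), add new vertices $v_1,\dots,v_s,w_1,\dots,w_s$, and for each $i\in[s/2]$ add all four edges between $\{v_i,v_{i+s/2}\}$ and $\{v_i^{\uparrow},v_i^{\downarrow}\}$ and all four edges between $\{w_i,w_{i+s/2}\}$ and $\{w_i^{\uparrow},w_i^{\downarrow}\}$. The augmented network $\check B_\ell$ is $B_\ell$ plus edges $w_{2i-1}w_{2i}$, $i\in[s/2]$. Blowup: $H\otimes J_t$ has vertices $v^{(i)}$ ($v\in V(H)$, $i\in[t]$) and edges $u^{(i)}v^{(j)}$ for $uv\in E(H)$, all $i,j$, and $u^{(i)}u^{(j)}$ for $i\neq j$. A matching on $X$ is a set of pairwise disjoint pairs of distinct vertices of $X$; $X$ is matching-linked in a graph if for every matching $M$ on $X$ there are pairwise vertex-disjoint paths connecting the endpoints of each pair of $M$. Linkage capacity $\gamma(H)$: the supremum of all $c>0$ such that for all sufficiently large $t$ the blowup $H\otimes J_t$ contains a matching-linked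 set of size $\lfloor ct\rfloor$. *)

theory Defs
  imports Complex_Main "HOL-Library.Extended_Real"
begin

datatype bvert = BIn nat | BOut nat | BUp bvert | BDn bvert

text \<open>Bene\v{s} network B_l (for l >= 1): inputs BIn 1..BIn s, outputs BOut 1..BOut s, s = 2^l;
  the two copies of B_(l-1) are embedded via BUp and BDn.\<close>

fun benes_V :: "nat \<Rightarrow> bvert set" where
  "benes_V 0 = {}"
| "benes_V (Suc 0) = {BIn 1, BIn 2, BOut 1, BOut 2}"
| "benes_V (Suc (Suc n)) =
     BIn ` {1..2^(Suc (Suc n))} \<union> BOut ` {1..2^(Suc (Suc n))}
     \<union> BUp ` benes_V (Suc n) \<union> BDn ` benes_V (Suc n)"

fun benes_E :: "nat \<Rightarrow> bvert set set" where
  "benes_E 0 = {}"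
| "benes_E (Suc 0) = {{BIn i, BOut j} | i j. i \<in> {1,2} \<and> j \<in> {1,2}}"
| "benes_E (Suc (Suc n)) =
     (\<lambda>e. BUp ` e) ` benes_E (Suc n) \<union> (\<lambda>e. BDn ` e) ` benes_E (Suc n)
     \<union> {{BIn a, c (BIn i)} | a i c. i \<in> {1..2^(Suc n)} \<and> a \<in> {i, i + 2^(Suc n)} \<and> c \<in> {BUp, BDn}}
     \<union> {{BOut a, c (BOut i)} | a i c. i \<in> {1..2^(Suc n)} \<and> a \<in> {i, i + 2^(Suc n)} \<and> c \<in> {BUp, BDn}}"

definition aug_benes_V :: "nat \<Rightarrow> bvert set" where
  "aug_benes_V l = benes_V l"

definition aug_benes_E :: "nat \<Rightarrow> bvert set set" where
  "aug_benes_E l = benes_E l \<union> {{BOut (2*i - 1), BOut (2*i)} | i. i \<in> {1..2^l div 2}}"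

definition blowup_V :: "'a set \<Rightarrow> nat \<Rightarrow> ('a \<times> nat) set" where
  "blowup_V V t = V \<times> {1..t}"

definition blowup_E :: "'a set set \<Rightarrow> 'a set \<Rightarrow> nat \<Rightarrow> ('a \<times> nat) set set" where
  "blowup_E E V t =
     {{(u, i), (v, j)} | u v i j. {u, v} \<in> E \<and> i \<in> {1..t} \<and> j \<in> {1..t}}
     \<union> {{(u, i), (u, j)} | u i j. u \<in> V \<and> i \<in> {1..t} \<and> j \<in> {1..t} \<and> i \<noteq> j}"

definition is_path :: "'a set \<Rightarrow> 'a set set \<Rightarrow> 'a list \<Rightarrow> 'a \<Rightarrow> 'a \<Rightarrow> bool" where
  "is_path V E p a b \<longleftrightarrow> p \<noteq> [] \<and> hd p = a \<and> last p = b \<and> distinct p \<and> set p \<subseteq> V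
     \<and> (\<forall>k. Suc k < length p \<longrightarrow> {p ! k, p ! Suc k} \<in> E)"

definition matching_on :: "'a set set \<Rightarrow> 'a set \<Rightarrow> bool" where
  "matching_on M X \<longleftrightarrow> (\<forall>e\<in>M. \<exists>a b. e = {a, b} \<and> a \<noteq> b \<and> a \<in> X \<and> b \<in> X)
     \<and> (\<forall>e\<in>M. \<forall>e'\<in>M. e \<noteq> e' \<longrightarrow> e \<inter> e' = {})"

definition matching_linked :: "'a set \<Rightarrow> 'a set set \<Rightarrow> 'a set \<Rightarrow> bool" where
  "matching_linked V E X \<longleftrightarrow>
     (\<forall>M. matching_on M X \<longrightarrow>
        (\<exists>P :: 'a set \<Rightarrow> 'a list.
           (\<forall>e\<in>M. \<exists>a b. e = {a, b} \<and> is_path V E (P e) a b)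
         \<and> (\<forall>e\<in>M. \<forall>e'\<in>M. e \<noteq> e' \<longrightarrow> set (P e) \<inter> set (P e') = {})))"

definition linkage_capacity :: "'a set \<Rightarrow> 'a set set \<Rightarrow> ereal" where
  "linkage_capacity V E =
     (SUP c \<in> {c :: real. c > 0 \<and>
        (\<exists>T. \<forall>t \<ge> T. \<exists>X. X \<subseteq> blowup_V V t \<and> card X = nat \<lfloor>c * real t\<rfloor>
                        \<and> matching_linked (blowup_V V t) (blowup_E E V t) X)}. ereal c)"

end

theory Submission
  imports Defs
begin

text \<open>Let \<open>X\<close> consist of the first \<open>\<lfloor>t/2\<rfloor>\<close> copies of every output of \<open>B\<^sub>l\<close>, so that
  \<open>|X| = s \<lfloor>t/2\<rfloor> \<ge> \<lfloor>s t / 3\<rfloor>\<close> for \<open>t \<ge> 2\<close>. Given a matching on \<open>X\<close>, send each pair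
  \<open>{x, y}\<close> along two walks through \<open>B\<^sub>l\<close>, from the outputs of \<open>x\<close> and of \<open>y\<close> to the input
  with the index of \<open>x\<close>. Then every terminal is the end of at most \<open>2 \<lfloor>t/2\<rfloor>\<close> walks, and the
  Bene\v{s} routing argument routes such a family of demands so that no vertex is used more than
  \<open>2 \<lfloor>t/2\<rfloor> \<le> t\<close> times: orient the demand multigraph between the switches of the first
  level so that in- and out-degrees differ by at most one, send the demands of one orientation
  through the upper copy of \<open>B\<^sub>l\<^sub>-\<^sub>1\<close> and the others through the lower one, and recurse.
  Outputs occur only as ends of the joined walks, so giving each visit of an inner vertex its own
  copy turns the walks into vertex-disjoint paths of the blow-up.\<close>

section \<open>Balanced orientations of multigraphs\<close>

text \<open>A multigraph is given by its edge set \<open>P\<close> and the ends \<open>f p\<close>, \<open>g p\<close> of each edge \<open>p\<close>.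
  An orientation \<open>dir\<close> directs \<open>p\<close> from \<open>orient dir f g p\<close> to \<open>orient dir g f p\<close>, and
  \<open>orient_excess\<close> is out-degree minus in-degree.\<close>

definition orient :: "('p \<Rightarrow> bool) \<Rightarrow> ('p \<Rightarrow> 'v) \<Rightarrow> ('p \<Rightarrow> 'v) \<Rightarrow> 'p \<Rightarrow> 'v" where
  "orient dir f g p = (if dir p then f p else g p)"

definition orient_excess :: "('p \<Rightarrow> bool) \<Rightarrow> ('p \<Rightarrow> 'v) \<Rightarrow> ('p \<Rightarrow> 'v) \<Rightarrow> 'p set \<Rightarrow> 'v \<Rightarrow> int" where
  "orient_excess dir f g P v = (\<Sum>p\<in>P. of_bool (orient dir f g p = v) - of_bool (orient dir g f p = v))"

lemma orient_excess_remove: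
  assumes "finite P" "p \<in> P"
  shows "orient_excess dir f g P v =
    of_bool (orient dir f g p = v) - of_bool (orient dir g f p = v) + orient_excess dir f g (P - {p}) v"
  unfolding orient_excess_def using assms by (rule sum.remove)

lemma orient_excess_remove_loop:
  assumes "finite P" "p \<in> P" "f p = g p"
  shows "orient_excess dir f g P v = orient_excess dir f g (P - {p}) v"
  using orient_excess_remove[OF assms(1,2), of dir f g v] assms(3) by (simp add: orient_def)

lemma orient_excess_subset_diff:
  assumes "finite P" "Q \<subseteq> P"
  shows "orient_excess dir f g P v = orient_excess dir f g Q v + orient_excess dir f g (P - Q) v"
  unfolding orient_excess_def using sum.subset_diff[OF assms(2,1)] by (simp add: add.commute)

lemma orient_excess_cong:
  assumes "\<And>p. p \<in> P \<Longrightarrow> orient dir f g p = orient dir' f' g' p \<and> orient dir g f p = orient dir' g' f' p"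
  shows "orient_excess dir f g P v = orient_excess dir' f' g' P v"
  unfolding orient_excess_def using assms by (intro sum.cong) auto

lemma orient_excess_merge:
  assumes "finite P" "p1 \<in> P" "p2 \<in> P" "p1 \<noteq> p2"
    and "{f p1, g p1} = {u, v}" "{f p2, g p2} = {v, w}" "u \<noteq> v" "w \<noteq> v"
  shows "\<exists>dir. \<forall>x. orient_excess dir f g P x = orient_excess dir' (f(p1 := u)) (g(p1 := w)) (P - {p2}) x"
proof -
  define dir where "dir p = (if p = p1 then (if dir' p1 then f p1 = u else f p1 = v)
                           else if p = p2 then (if dir' p1 then f p2 = v else f p2 = w) else dir' p)" for p
  have p1: "orient dir f g p1 = (if dir' p1 then u else v) \<and> orient dir g f p1 = (if dir' p1 then v else u)"
    using assms(5,7) by (auto simp: orient_def dir_def doubleton_eq_iff)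
  have p2: "orient dir f g p2 = (if dir' p1 then v else w) \<and> orient dir g f p2 = (if dir' p1 then w else v)"
    using assms(4,6,8) by (auto simp: orient_def dir_def doubleton_eq_iff)
  have pair: "orient_excess dir f g {p1, p2} x = orient_excess dir' (f(p1 := u)) (g(p1 := w)) {p1} x" for x
    using assms(4) p1 p2 unfolding orient_excess_def by (cases "dir' p1") (simp_all add: orient_def)
  have rest: "orient_excess dir f g (P - {p1, p2}) x = orient_excess dir' (f(p1 := u)) (g(p1 := w)) (P - {p1, p2}) x" for x
    by (rule orient_excess_cong) (auto simp: orient_def dir_def)
  have "orient_excess dir f g P x = orient_excess dir' (f(p1 := u)) (g(p1 := w)) (P - {p2}) x" for x
  proof -
    have "orient_excess dir f g P x = orient_excess dir f g {p1, p2} x + orient_excess dir f g (P - {p1, p2}) x"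
      using assms(1-3) by (intro orient_excess_subset_diff) auto
    also have "\<dots> = orient_excess dir' (f(p1 := u)) (g(p1 := w)) {p1} x
        + orient_excess dir' (f(p1 := u)) (g(p1 := w)) (P - {p2} - {p1}) x"
      using pair rest by (simp add: Diff_insert2[symmetric] insert_commute)
    also have "\<dots> = orient_excess dir' (f(p1 := u)) (g(p1 := w)) (P - {p2}) x"
      using assms(1,2,4) by (intro orient_excess_subset_diff[symmetric]) auto
    finally show ?thesis .
  qed
  then show ?thesis by blast
qed

lemma orient_excess_disjoint_edges:
  assumes "finite P" and disj: "\<forall>p\<in>P. \<forall>q\<in>P. p \<noteq> q \<longrightarrow> {f p, g p} \<inter> {f q, g q} = {}"
  shows "\<bar>orient_excess dir f g P v\<bar> \<le> 1"
proof (cases "\<exists>q\<in>P. v \<in> {f q, g q}")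
  case True
  then obtain q where q: "q \<in> P" "v \<in> {f q, g q}" by blast
  have "orient_excess dir f g (P - {q}) v = 0"
    unfolding orient_excess_def using disj q by (intro sum.neutral) (auto simp: orient_def)
  then show ?thesis using orient_excess_remove[OF assms(1) q(1), of dir f g v] by auto
next
  case False
  then have "orient_excess dir f g P v = 0"
    unfolding orient_excess_def by (intro sum.neutral) (auto simp: orient_def)
  then show ?thesis by simp
qed

text \<open>Every finite multigraph has an orientation in which in- and out-degree differ by at most one
  at each vertex: delete loops, replace two edges u--v, v--w at a common vertex by one edge u--w,
  and once all edges are disjoint orient arbitrarily; an orientation of the reduced graph lifts
  back by orienting u--v--w along u--w.\<close>

lemma balanced_orientation_exists:
  fixes f g :: "'p \<Rightarrow> 'v"
  assumes "finite P"
  shows "\<exists>dir. \<forall>v. \<bar>orient_excess dir f g P v\<bar> \<le> 1"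
  using assms
proof (induction "card P" arbitrary: P f g rule: less_induct)
  case less
  show ?case
  proof (cases "\<exists>p\<in>P. f p = g p")
    case True
    then obtain p where loop: "p \<in> P" "f p = g p" by blast
    obtain dir where "\<forall>v. \<bar>orient_excess dir f g (P - {p}) v\<bar> \<le> 1"
      using less.hyps[of "P - {p}" f g] less.prems loop(1) by (meson card_Diff1_less finite_Diff)
    then show ?thesis using orient_excess_remove_loop[OF less.prems loop(1), of f g] loop(2) by metis
  next
    case no_loop: False
    show ?thesis
    proof (cases "\<exists>p1\<in>P. \<exists>p2\<in>P. p1 \<noteq> p2 \<and> {f p1, g p1} \<inter> {f p2, g p2} \<noteq> {}")
      case True
      then obtain p1 p2 v where shared: "p1 \<in> P" "p2 \<in> P" "p1 \<noteq> p2" "v \<in> {f p1, g p1}" "v \<in> {f p2, g p2}"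
        by blast
      define u where "u = (if f p1 = v then g p1 else f p1)"
      define w where "w = (if f p2 = v then g p2 else f p2)"
      have uv: "{f p1, g p1} = {u, v}" "u \<noteq> v" and vw: "{f p2, g p2} = {v, w}" "w \<noteq> v"
        using shared no_loop unfolding u_def w_def by auto
      obtain dir' where "\<forall>x. \<bar>orient_excess dir' (f(p1 := u)) (g(p1 := w)) (P - {p2}) x\<bar> \<le> 1"
        using less.hyps[of "P - {p2}" "f(p1 := u)" "g(p1 := w)"] less.prems shared(2)
        by (meson card_Diff1_less finite_Diff)
      then show ?thesis
        using orient_excess_merge[OF less.prems shared(1-3) uv(1) vw(1) uv(2) vw(2), of dir'] by metis
    next
      case False
      then show ?thesis using orient_excess_disjoint_edges[OF less.prems, of f g] by blast
    qed
  qed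
qed

lemma orient_excess_eq_card:
  assumes "finite P"
  shows "orient_excess dir f g P v
    = int (card {p\<in>P. orient dir f g p = v}) - int (card {p\<in>P. orient dir g f p = v})"
  unfolding orient_excess_def using assms
  by (simp add: sum_subtractf of_bool_def sum.If_cases Int_def conj_commute)

lemma card_split_le_if_balanced:
  assumes "finite P" "card {p\<in>P. Q p} \<le> 2 * D"
    and "\<bar>int (card {p\<in>P. Q p \<and> dir p}) - int (card {p\<in>P. Q p \<and> \<not> dir p})\<bar> \<le> 1"
  shows "card {p\<in>P. dir p = b \<and> Q p} \<le> D"
proof -
  have "card {p\<in>P. Q p} = card {p\<in>P. Q p \<and> dir p} + card {p\<in>P. Q p \<and> \<not> dir p}"
    using assms(1) by (subst card_Un_disjoint[symmetric]) (auto intro: arg_cong[where f = card])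
  moreover have "{p\<in>P. dir p = b \<and> Q p} = (if b then {p\<in>P. Q p \<and> dir p} else {p\<in>P. Q p \<and> \<not> dir p})"
    by auto
  ultimately show ?thesis using assms(2,3) by (cases b) simp_all
qed

section \<open>Routing in the Bene\v{s} network\<close>

text \<open>In \<open>B\<^sub>l\<close> with \<open>s = 2 * h\<close>, the terminals \<open>a\<close> and \<open>a + h\<close> are joined to the terminal
  \<open>half_index h a\<close> of both copies of \<open>B\<^sub>l\<^sub>-\<^sub>1\<close>.\<close>

definition half_index :: "nat \<Rightarrow> nat \<Rightarrow> nat" where
  "half_index h a = (if a \<le> h then a else a - h)"

lemma half_index_range: "a \<in> {1..2 * h} \<Longrightarrow> half_index h a \<in> {1..h}"
  by (auto simp: half_index_def)

lemma half_index_mem: "a \<in> {half_index h a, half_index h a + h}"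
  by (auto simp: half_index_def)

lemma card_half_index_le:
  assumes "finite P" "\<forall>a. card {p\<in>P. x p = a} \<le> D"
  shows "card {p\<in>P. half_index h (x p) = i} \<le> 2 * D"
proof -
  have "card {p\<in>P. half_index h (x p) = i} \<le> card ({p\<in>P. x p = i} \<union> {p\<in>P. x p = i + h})"
    using assms(1) by (intro card_mono) (auto simp: half_index_def)
  also have "\<dots> \<le> card {p\<in>P. x p = i} + card {p\<in>P. x p = i + h}" by (rule card_Un_le)
  also have "\<dots> \<le> 2 * D" using assms(2) by (metis add_mono mult_2)
  finally show ?thesis .
qed

text \<open>Routing demands between outputs \<open>oa\<close> and inputs \<open>ia\<close> of \<open>B\<^sub>l\<close> can be split between the two
  copies of \<open>B\<^sub>l\<^sub>-\<^sub>1\<close> without raising the maximal load of a terminal: balance the bipartite multigraph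
  joining the switch \<open>half_index h (oa p)\<close> to the switch \<open>half_index h (ia p)\<close>, and route
  along the upper copy exactly the edges oriented from the output side.\<close>

lemma benes_demand_split:
  assumes "finite P" "\<forall>a. card {p\<in>P. oa p = a} \<le> D" "\<forall>k. card {p\<in>P. ia p = k} \<le> D"
  shows "\<exists>dir. \<forall>(b::bool) i. card {p\<in>P. dir p = b \<and> half_index h (oa p) = i} \<le> D
                 \<and> card {p\<in>P. dir p = b \<and> half_index h (ia p) = i} \<le> D"
proof -
  define f where "f p = (Inl (half_index h (oa p)) :: nat + nat)" for p
  define g where "g p = (Inr (half_index h (ia p)) :: nat + nat)" for p
  obtain dir where bal: "\<forall>v. \<bar>orient_excess dir f g P v\<bar> \<le> 1"
    using balanced_orientation_exists[OF assms(1)] by blast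
  have "card {p\<in>P. dir p = b \<and> half_index h (oa p) = i} \<le> D" for b i
  proof (rule card_split_le_if_balanced[OF assms(1) card_half_index_le[OF assms(1,2)]])
    have "{p\<in>P. orient dir f g p = Inl i} = {p\<in>P. half_index h (oa p) = i \<and> dir p}"
      "{p\<in>P. orient dir g f p = Inl i} = {p\<in>P. half_index h (oa p) = i \<and> \<not> dir p}"
      by (auto simp: orient_def f_def g_def)
    with bal[rule_format, of "Inl i"] show "\<bar>int (card {p\<in>P. half_index h (oa p) = i \<and> dir p})
        - int (card {p\<in>P. half_index h (oa p) = i \<and> \<not> dir p})\<bar> \<le> 1"
      by (simp add: orient_excess_eq_card[OF assms(1)])
  qed
  moreover have "card {p\<in>P. dir p = b \<and> half_index h (ia p) = i} \<le> D" for b i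
  proof (rule card_split_le_if_balanced[OF assms(1) card_half_index_le[OF assms(1,3)]])
    have "{p\<in>P. orient dir f g p = Inr i} = {p\<in>P. half_index h (ia p) = i \<and> \<not> dir p}"
      "{p\<in>P. orient dir g f p = Inr i} = {p\<in>P. half_index h (ia p) = i \<and> dir p}"
      by (auto simp: orient_def f_def g_def)
    with bal[rule_format, of "Inr i"] show "\<bar>int (card {p\<in>P. half_index h (ia p) = i \<and> dir p})
        - int (card {p\<in>P. half_index h (ia p) = i \<and> \<not> dir p})\<bar> \<le> 1"
      by (simp add: orient_excess_eq_card[OF assms(1)] abs_minus_commute)
  qed
  ultimately show ?thesis by blast
qed

definition benes_route :: "nat \<Rightarrow> nat \<Rightarrow> nat \<Rightarrow> bvert list \<Rightarrow> bool" where
  "benes_route l a k W \<longleftrightarrow> W \<noteq> [] \<and> hd W = BOut a \<and> last W = BIn k \<and> set W \<subseteq> benes_V l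
     \<and> successively (\<lambda>x y. {x, y} \<in> benes_E l) W \<and> set (tl W) \<inter> range BOut = {}"

definition benes_copy :: "bool \<Rightarrow> bvert \<Rightarrow> bvert" where
  "benes_copy b = (if b then BUp else BDn)"

lemma benes_V_terminals:
  assumes "a \<in> {1..2 ^ Suc n}"
  shows "BOut a \<in> benes_V (Suc n)" "BIn a \<in> benes_V (Suc n)"
  using assms by (cases n; auto)+

lemma benes_V_copy: "x \<in> benes_V (Suc n) \<Longrightarrow> benes_copy b x \<in> benes_V (Suc (Suc n))"
  by (auto simp: benes_copy_def)

lemma benes_E_copy:
  assumes "{x, y} \<in> benes_E (Suc n)"
  shows "{benes_copy b x, benes_copy b y} \<in> benes_E (Suc (Suc n))"
proof -
  have "{benes_copy b x, benes_copy b y} \<in> (\<lambda>e. benes_copy b ` e) ` benes_E (Suc n)"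
    using imageI[OF assms, of "\<lambda>e. benes_copy b ` e"] by simp
  then have "{benes_copy b x, benes_copy b y}
      \<in> (\<lambda>e. BUp ` e) ` benes_E (Suc n) \<union> (\<lambda>e. BDn ` e) ` benes_E (Suc n)"
    by (cases b) (simp_all only: benes_copy_def if_True if_False Un_iff simp_thms)
  then show ?thesis unfolding benes_E.simps(3) by (rule UnI1[OF UnI1])
qed

lemma benes_E_out:
  assumes "i \<in> {1..2 ^ Suc n}" "a \<in> {i, i + 2 ^ Suc n}"
  shows "{BOut a, benes_copy b (BOut i)} \<in> benes_E (Suc (Suc n))"
proof -
  have "{BOut a, benes_copy b (BOut i)} \<in> {{BOut a', c (BOut i')} | a' i' c.
      i' \<in> {1..2 ^ Suc n} \<and> a' \<in> {i', i' + 2 ^ Suc n} \<and> c \<in> {BUp, BDn}}"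
    using assms by (intro CollectI exI[of _ a] exI[of _ i] exI[of _ "benes_copy b"]) (simp add: benes_copy_def)
  then show ?thesis unfolding benes_E.simps(3) by (rule UnI2)
qed

lemma benes_E_in:
  assumes "i \<in> {1..2 ^ Suc n}" "a \<in> {i, i + 2 ^ Suc n}"
  shows "{benes_copy b (BIn i), BIn a} \<in> benes_E (Suc (Suc n))"
proof -
  have "{BIn a, benes_copy b (BIn i)} \<in> {{BIn a', c (BIn i')} | a' i' c.
      i' \<in> {1..2 ^ Suc n} \<and> a' \<in> {i', i' + 2 ^ Suc n} \<and> c \<in> {BUp, BDn}}"
    using assms by (intro CollectI exI[of _ a] exI[of _ i] exI[of _ "benes_copy b"]) (simp add: benes_copy_def)
  then have "{BIn a, benes_copy b (BIn i)} \<in> benes_E (Suc (Suc n))"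
    unfolding benes_E.simps(3) by (rule UnI1[OF UnI2])
  then show ?thesis by (simp only: insert_commute)
qed

lemma terminal_neq_benes_copy [simp]: "BOut a \<noteq> benes_copy b v" "BIn a \<noteq> benes_copy b v"
  by (simp_all add: benes_copy_def)

lemma count_list_map_benes_copy:
  "count_list (map (benes_copy b) W) (benes_copy b' v) = (if b = b' then count_list W v else 0)"
  "count_list (map (benes_copy b) W) (BIn k) = 0"
  "count_list (map (benes_copy b) W) (BOut a) = 0"
  by (induction W) (auto simp: benes_copy_def)

lemma benes_route_base:
  assumes "a \<in> {1, 2}" "k \<in> {1, 2}"
  shows "benes_route (Suc 0) a k [BOut a, BIn k]"
proof -
  have "{BIn k, BOut a} \<in> benes_E (Suc 0)"
    using assms by (intro benes_E.simps(2)[THEN equalityD2, THEN subsetD] CollectI exI[of _ k] exI[of _ a]) simp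
  moreover have "{BOut a, BIn k} \<subseteq> benes_V (Suc 0)" using assms by auto
  ultimately show ?thesis unfolding benes_route_def by (auto simp: insert_commute)
qed

lemma benes_route_lift:
  assumes a: "a \<in> {1..2 ^ Suc (Suc n)}" and k: "k \<in> {1..2 ^ Suc (Suc n)}"
    and W: "benes_route (Suc n) (half_index (2 ^ Suc n) a) (half_index (2 ^ Suc n) k) W"
  shows "benes_route (Suc (Suc n)) a k (BOut a # map (benes_copy b) W @ [BIn k])"
proof -
  let ?h = "2 ^ Suc n :: nat"
  have a': "half_index ?h a \<in> {1..?h}" and k': "half_index ?h k \<in> {1..?h}"
    using a k half_index_range[of _ ?h] by simp_all
  have "successively (\<lambda>x y. {x, y} \<in> benes_E (Suc n)) W" using W by (simp add: benes_route_def)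
  then have "successively (\<lambda>x y. {benes_copy b x, benes_copy b y} \<in> benes_E (Suc (Suc n))) W"
    by (rule successively_mono) (rule benes_E_copy)
  then have "successively (\<lambda>x y. {x, y} \<in> benes_E (Suc (Suc n))) (map (benes_copy b) W)"
    by (simp only: successively_map)
  moreover have "{BOut a, benes_copy b (BOut (half_index ?h a))} \<in> benes_E (Suc (Suc n))"
    using a' half_index_mem by (rule benes_E_out)
  moreover have "{benes_copy b (BIn (half_index ?h k)), BIn k} \<in> benes_E (Suc (Suc n))"
    using k' half_index_mem by (rule benes_E_in)
  ultimately have "successively (\<lambda>x y. {x, y} \<in> benes_E (Suc (Suc n))) (BOut a # map (benes_copy b) W @ [BIn k])"
    using W by (auto simp: benes_route_def successively_append_iff successively_Cons hd_map last_map
        simp del: benes_E.simps)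
  moreover have "set (BOut a # map (benes_copy b) W @ [BIn k]) \<subseteq> benes_V (Suc (Suc n))"
    using W benes_V_terminals[OF a] benes_V_terminals[OF k] benes_V_copy
    by (auto simp: benes_route_def simp del: benes_V.simps)
  moreover have "set (tl (BOut a # map (benes_copy b) W @ [BIn k])) \<inter> range BOut = {}"
    by (auto simp: benes_copy_def)
  moreover have "BOut a # map (benes_copy b) W @ [BIn k] \<noteq> []"
    "hd (BOut a # map (benes_copy b) W @ [BIn k]) = BOut a"
    "last (BOut a # map (benes_copy b) W @ [BIn k]) = BIn k" by simp_all
  ultimately show ?thesis unfolding benes_route_def by (intro conjI) assumption+
qed

lemma sum_of_bool_add_eq_card:
  "finite P \<Longrightarrow> (\<Sum>p\<in>P. of_bool (f p = u) + of_bool (g p = u))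
    = card {p\<in>P. f p = u} + card {p\<in>P. g p = u}"
  by (simp add: sum.distrib Int_def conj_commute)

lemma benes_lifted_routes_load:
  fixes oa ia :: "'p \<Rightarrow> nat" and dir :: "'p \<Rightarrow> bool"
  assumes "finite P" "\<forall>a. card {p\<in>P. oa p = a} \<le> D" "\<forall>k. card {p\<in>P. ia p = k} \<le> D"
    and copies: "\<forall>b u. (\<Sum>p\<in>{p\<in>P. dir p = b}. count_list (V b p) u) \<le> D"
  shows "(\<Sum>p\<in>P. count_list (BOut (oa p) # map (benes_copy (dir p)) (V (dir p) p) @ [BIn (ia p)]) u) \<le> D"
proof -
  define W where "W p = BOut (oa p) # map (benes_copy (dir p)) (V (dir p) p) @ [BIn (ia p)]" for p
  have copy_load: "(\<Sum>p\<in>P. count_list (W p) (benes_copy b v)) \<le> D" for b v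
  proof -
    have "(\<Sum>p\<in>P. count_list (W p) (benes_copy b v)) = (\<Sum>p\<in>P. if dir p = b then count_list (V b p) v else 0)"
      by (intro sum.cong) (simp_all add: W_def count_list_map_benes_copy)
    also have "\<dots> = (\<Sum>p\<in>{p\<in>P. dir p = b}. count_list (V b p) v)"
      using assms(1) by (simp add: sum.inter_filter)
    finally show ?thesis using copies by simp
  qed
  have terminal_load: "(\<Sum>p\<in>P. count_list (W p) u)
      = card {p\<in>P. BOut (oa p) = u} + card {p\<in>P. BIn (ia p) = u}" if "u \<in> range BOut \<union> range BIn"
  proof -
    have "(\<Sum>p\<in>P. count_list (W p) u) = (\<Sum>p\<in>P. of_bool (BOut (oa p) = u) + of_bool (BIn (ia p) = u))"
      using that by (intro sum.cong) (auto simp: W_def count_list_map_benes_copy)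
    then show ?thesis using assms(1) by (simp only: sum_of_bool_add_eq_card)
  qed
  have "(\<Sum>p\<in>P. count_list (W p) u) \<le> D"
  proof (cases u)
    case (BUp v)
    then show ?thesis using copy_load[of True v] by (simp add: benes_copy_def)
  next
    case (BDn v)
    then show ?thesis using copy_load[of False v] by (simp add: benes_copy_def)
  qed (use terminal_load assms(2,3) in simp_all)
  then show ?thesis by (simp only: W_def)
qed

lemma benes_routing:
  fixes oa ia :: "'p \<Rightarrow> nat"
  assumes "finite P" "\<forall>p\<in>P. oa p \<in> {1..2 ^ Suc n} \<and> ia p \<in> {1..2 ^ Suc n}"
    and "\<forall>a. card {p\<in>P. oa p = a} \<le> D" "\<forall>k. card {p\<in>P. ia p = k} \<le> D"
  shows "\<exists>W. (\<forall>p\<in>P. benes_route (Suc n) (oa p) (ia p) (W p))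
             \<and> (\<forall>u. (\<Sum>p\<in>P. count_list (W p) u) \<le> D)"
  using assms
proof (induction n arbitrary: P oa ia)
  case 0
  have "benes_route (Suc 0) (oa p) (ia p) [BOut (oa p), BIn (ia p)]" if "p \<in> P" for p
    using 0(2) that by (intro benes_route_base) auto
  moreover have "(\<Sum>p\<in>P. count_list [BOut (oa p), BIn (ia p)] u) \<le> D" for u
    using benes_lifted_routes_load[OF 0(1,3,4), of "\<lambda>_ _. []" "\<lambda>_. True"] by simp
  ultimately show ?case by (intro exI[of _ "\<lambda>p. [BOut (oa p), BIn (ia p)]"]) blast
next
  case (Suc n)
  let ?h = "2 ^ Suc n :: nat"
  obtain dir :: "'p \<Rightarrow> bool" where dir: "\<forall>b i. card {p\<in>P. dir p = b \<and> half_index ?h (oa p) = i} \<le> D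
      \<and> card {p\<in>P. dir p = b \<and> half_index ?h (ia p) = i} \<le> D"
    using benes_demand_split[OF Suc.prems(1,3,4)] by blast
  have "\<forall>b. \<exists>W. (\<forall>p\<in>{p\<in>P. dir p = b}. benes_route (Suc n) (half_index ?h (oa p)) (half_index ?h (ia p)) (W p))
      \<and> (\<forall>u. (\<Sum>p\<in>{p\<in>P. dir p = b}. count_list (W p) u) \<le> D)"
  proof (rule allI, rule Suc.IH)
    fix b
    show "finite {p\<in>P. dir p = b}" using Suc.prems(1) by simp
    show "\<forall>p\<in>{p\<in>P. dir p = b}. half_index ?h (oa p) \<in> {1..?h} \<and> half_index ?h (ia p) \<in> {1..?h}"
      using Suc.prems(2) half_index_range[of _ ?h] by simp
    show "\<forall>a. card {p\<in>{p\<in>P. dir p = b}. half_index ?h (oa p) = a} \<le> D"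
      "\<forall>k. card {p\<in>{p\<in>P. dir p = b}. half_index ?h (ia p) = k} \<le> D"
      using dir by (simp_all add: conj_assoc)
  qed
  then obtain V where V: "\<forall>b. (\<forall>p\<in>{p\<in>P. dir p = b}.
        benes_route (Suc n) (half_index ?h (oa p)) (half_index ?h (ia p)) (V b p))
      \<and> (\<forall>u. (\<Sum>p\<in>{p\<in>P. dir p = b}. count_list (V b p) u) \<le> D)"
    by (rule choice[THEN exE])
  define W where "W p = BOut (oa p) # map (benes_copy (dir p)) (V (dir p) p) @ [BIn (ia p)]" for p
  have "benes_route (Suc (Suc n)) (oa p) (ia p) (W p)" if "p \<in> P" for p
    unfolding W_def using Suc.prems(2) V that by (intro benes_route_lift) auto
  moreover have "(\<Sum>p\<in>P. count_list (W p) u) \<le> D" for u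
    unfolding W_def using V by (intro benes_lifted_routes_load[OF Suc.prems(1,3,4)]) blast
  ultimately show ?case by blast
qed

section \<open>Disjoint paths in blow-ups\<close>

lemma is_path_iff_successively:
  "is_path V E p a b \<longleftrightarrow> p \<noteq> [] \<and> hd p = a \<and> last p = b \<and> distinct p \<and> set p \<subseteq> V
     \<and> successively (\<lambda>x y. {x, y} \<in> E) p"
  unfolding is_path_def successively_conv_nth by blast

lemma blowup_E_lift:
  assumes "{fst a, fst b} \<in> E" "snd a \<in> {1..t}" "snd b \<in> {1..t}"
  shows "{a, b} \<in> blowup_E E V t"
proof -
  have "{(fst a, snd a), (fst b, snd b)} \<in> blowup_E E V t"
    using assms unfolding blowup_E_def by blast
  then show ?thesis by simp
qed

lemma card_nth_eq_count_list: "card {k. k < length xs \<and> xs ! k = u} = count_list xs u"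
  by (simp add: count_list_eq_length_filter length_filter_conv_card eq_commute)

text \<open>\<open>c e k\<close> is the copy of the \<open>k\<close>-th vertex of the walk \<open>mid e\<close>; injectivity says that
  no copy is used twice.\<close>

lemma exists_copy_assignment:
  fixes mid :: "'e \<Rightarrow> 'v list"
  assumes "finite M" "\<forall>u. (\<Sum>e\<in>M. count_list (mid e) u) \<le> t"
  shows "\<exists>c. (\<forall>e\<in>M. \<forall>k<length (mid e). c e k \<in> {1..t})
             \<and> inj_on (\<lambda>(e, k). (mid e ! k, c e k)) (SIGMA e:M. {..<length (mid e)})"
proof -
  define visits where "visits u = (SIGMA e:M. {k. k < length (mid e) \<and> mid e ! k = u})" for u
  have "finite (visits u)" for u
    unfolding visits_def using assms(1) by (intro finite_SigmaI) auto
  moreover have "card (visits u) \<le> t" for u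
    using assms unfolding visits_def by (simp add: card_SigmaI card_nth_eq_count_list)
  ultimately have "\<forall>u. \<exists>f. f ` visits u \<subseteq> {1..t} \<and> inj_on f (visits u)"
    by (metis card_atLeastAtMost card_le_inj diff_Suc_1 finite_atLeastAtMost)
  then obtain f where f: "\<forall>u. f u ` visits u \<subseteq> {1..t} \<and> inj_on (f u) (visits u)"
    by (rule choice[THEN exE])
  define c where "c e k = f (mid e ! k) (e, k)" for e k
  have visit: "(e, k) \<in> visits (mid e ! k)" if "e \<in> M" "k < length (mid e)" for e k
    using that unfolding visits_def by simp
  have "c e k \<in> {1..t}" if "e \<in> M" "k < length (mid e)" for e k
    using f visit[OF that] unfolding c_def by blast
  moreover have "inj_on (\<lambda>(e, k). (mid e ! k, c e k)) (SIGMA e:M. {..<length (mid e)})"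
  proof (rule inj_onI, clarsimp)
    fix e k e' k'
    assume "e \<in> M" "k < length (mid e)" "e' \<in> M" "k' < length (mid e')"
      and same: "mid e ! k = mid e' ! k'" "c e k = c e' k'"
    then have "(e, k) \<in> visits (mid e ! k)" "(e', k') \<in> visits (mid e ! k)"
      using visit[of e k] visit[of e' k'] by simp_all
    then show "e = e' \<and> k = k'" using f same unfolding c_def inj_on_def by auto
  qed
  ultimately show ?thesis by blast
qed

lemma blowup_disjoint_paths:
  fixes mid :: "'e \<Rightarrow> 'v list" and x y :: "'e \<Rightarrow> 'v \<times> nat"
  assumes "finite M"
    and walk: "\<forall>e\<in>M. successively (\<lambda>a b. {a, b} \<in> E) (fst (x e) # mid e @ [fst (y e)])"
    and "S \<subseteq> V" and interior: "\<forall>e\<in>M. set (mid e) \<subseteq> V - S"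
    and ends: "\<forall>e\<in>M. x e \<in> S \<times> {1..t} \<and> y e \<in> S \<times> {1..t}" "\<forall>e\<in>M. x e \<noteq> y e"
    and ends_disjoint: "\<forall>e\<in>M. \<forall>e'\<in>M. e \<noteq> e' \<longrightarrow> {x e, y e} \<inter> {x e', y e'} = {}"
    and load: "\<forall>u. (\<Sum>e\<in>M. count_list (mid e) u) \<le> t"
  shows "\<exists>P. (\<forall>e\<in>M. is_path (blowup_V V t) (blowup_E E V t) (P e) (x e) (y e))
             \<and> (\<forall>e\<in>M. \<forall>e'\<in>M. e \<noteq> e' \<longrightarrow> set (P e) \<inter> set (P e') = {})"
proof -
  obtain c where c_range: "\<forall>e\<in>M. \<forall>k<length (mid e). c e k \<in> {1..t}"
    and c_inj: "inj_on (\<lambda>(e, k). (mid e ! k, c e k)) (SIGMA e:M. {..<length (mid e)})"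
    using exists_copy_assignment[OF assms(1) load] by blast
  define L where "L e = map (\<lambda>k. (mid e ! k, c e k)) [0..<length (mid e)]" for e
  define P where "P e = x e # L e @ [y e]" for e
  have set_L: "set (L e) = {(mid e ! k, c e k) | k. k < length (mid e)}" for e
    unfolding L_def by auto
  have L_in: "z \<in> (V - S) \<times> {1..t}" if e: "e \<in> M" and z: "z \<in> set (L e)" for e z
  proof -
    obtain k where "k < length (mid e)" "z = (mid e ! k, c e k)" using z unfolding set_L by blast
    then show ?thesis using nth_mem interior c_range e by fastforce
  qed
  have L_distinct: "distinct (L e)" if "e \<in> M" for e
    using c_inj that unfolding L_def distinct_map inj_on_def by force
  have L_disjoint: "set (L e) \<inter> set (L e') = {}" if "e \<in> M" "e' \<in> M" "e \<noteq> e'" for e e'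
    using c_inj that unfolding set_L inj_on_def by force
  have ends_notin_L: "x e' \<notin> set (L e)" "y e' \<notin> set (L e)" if "e \<in> M" "e' \<in> M" for e e'
    using L_in[OF that(1), of "x e'"] L_in[OF that(1), of "y e'"] ends that(2) by (auto simp: mem_Times_iff)
  have set_P: "set (P e) = {x e, y e} \<union> set (L e)" for e
    unfolding P_def by auto
  have "is_path (blowup_V V t) (blowup_E E V t) (P e) (x e) (y e)" if e: "e \<in> M" for e
  proof -
    have "map fst (L e) = mid e" unfolding L_def by (simp add: map_nth comp_def)
    then have "successively (\<lambda>a b. {a, b} \<in> E) (map fst (P e))"
      using walk e unfolding P_def by simp
    then have "successively (\<lambda>a b. {fst a, fst b} \<in> E) (P e)"
      by (simp only: successively_map)
    moreover have P_in: "set (P e) \<subseteq> V \<times> {1..t}"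
      using ends e L_in[OF e] \<open>S \<subseteq> V\<close> unfolding P_def by (auto simp: mem_Times_iff)
    ultimately have "successively (\<lambda>a b. {a, b} \<in> blowup_E E V t) (P e)"
      by (elim successively_mono, intro blowup_E_lift) (auto simp: mem_Times_iff)
    moreover have "distinct (P e)"
      using L_distinct[OF e] ends_notin_L[OF e e] ends(2) e unfolding P_def by simp
    ultimately show ?thesis
      using P_in unfolding is_path_iff_successively blowup_V_def by (simp add: P_def)
  qed
  moreover have "set (P e) \<inter> set (P e') = {}" if "e \<in> M" "e' \<in> M" "e \<noteq> e'" for e e'
    using L_disjoint[OF that] ends_disjoint that ends_notin_L[OF that(1,2)] ends_notin_L[OF that(2,1)]
    unfolding set_P by blast
  ultimately show ?thesis by blast
qed

section \<open>Linking the outputs\<close>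

lemma benes_route_join:
  assumes W: "benes_route l a k W" and W': "benes_route l a' k W'"
  defines "mid \<equiv> tl W @ rev (butlast (tl W'))"
  shows "successively (\<lambda>x y. {x, y} \<in> benes_E l) (BOut a # mid @ [BOut a'])"
    and "set mid \<subseteq> benes_V l - range BOut"
    and "count_list mid u \<le> count_list W u + count_list W' u"
proof -
  have W_eq: "W = BOut a # tl W" using W unfolding benes_route_def by (cases W) auto
  have "tl W' \<noteq> []" using W' unfolding benes_route_def by (cases W') auto
  then have W'_eq: "W' = BOut a' # butlast (tl W') @ [BIn k]"
    using W' unfolding benes_route_def by (cases W') (auto simp: last_tl, metis append_butlast_last_id)
  have rev_W': "rev W' = BIn k # rev (butlast (tl W')) @ [BOut a']"
    by (subst W'_eq) simp
  have "successively (\<lambda>x y. {x, y} \<in> benes_E l) (rev W')"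
    using W' unfolding benes_route_def by (simp add: insert_commute)
  then have "successively (\<lambda>x y. {x, y} \<in> benes_E l) (W @ tl (rev W'))"
    using W unfolding benes_route_def rev_W'
    by (auto simp: successively_append_iff successively_Cons)
  moreover have "W @ tl (rev W') = BOut a # mid @ [BOut a']"
    unfolding mid_def rev_W' by (subst W_eq) simp
  ultimately show "successively (\<lambda>x y. {x, y} \<in> benes_E l) (BOut a # mid @ [BOut a'])" by simp
  have tl_subset: "set (tl xs) \<subseteq> set xs" for xs :: "bvert list" by (cases xs) auto
  have "set mid \<subseteq> set (tl W) \<union> set (tl W')" unfolding mid_def by (auto dest: in_set_butlastD)
  then show "set mid \<subseteq> benes_V l - range BOut"
    using W W' tl_subset[of W] tl_subset[of W'] unfolding benes_route_def by blast
  have "count_list (butlast (tl W')) u \<le> count_list W' u"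
    by (subst (2) W'_eq) simp
  moreover have "count_list (tl W) u \<le> count_list W u"
    by (subst (2) W_eq) simp
  ultimately show "count_list mid u \<le> count_list W u + count_list W' u"
    unfolding mid_def by simp
qed

fun out_index :: "bvert \<Rightarrow> nat" where
  "out_index (BOut a) = a"
| "out_index _ = 0"

lemma inj_on_pair_endpoints:
  fixes x y :: "'e \<Rightarrow> 'v"
  assumes "\<forall>e\<in>M. x e \<noteq> y e" "\<forall>e\<in>M. \<forall>e'\<in>M. e \<noteq> e' \<longrightarrow> {x e, y e} \<inter> {x e', y e'} = {}"
  shows "inj_on (\<lambda>p. if snd p then x (fst p) else y (fst p)) (M \<times> UNIV)"
proof (rule inj_onI)
  fix p q :: "'e \<times> bool"
  assume "p \<in> M \<times> UNIV" "q \<in> M \<times> UNIV"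
    and "(if snd p then x (fst p) else y (fst p)) = (if snd q then x (fst q) else y (fst q))"
  then show "p = q" using assms by (cases p; cases q; cases "fst p = fst q") (auto split: if_splits)
qed

text \<open>As the ends of the pairs are distinct copies among the first \<open>d\<close> copies of the outputs,
  at most \<open>d\<close> routes start at each output and at most \<open>2 * d\<close> end at each input: two for each
  copy of the corresponding output that occurs as some \<open>x e\<close>.\<close>

lemma benes_matching_routes:
  fixes x y :: "'e \<Rightarrow> bvert \<times> nat"
  assumes "finite M"
    and ends: "\<forall>e\<in>M. x e \<in> BOut ` {1..2 ^ Suc n} \<times> {1..d} \<and> y e \<in> BOut ` {1..2 ^ Suc n} \<times> {1..d}"
    and distinct_ends: "\<forall>e\<in>M. x e \<noteq> y e"
    and disjoint_ends: "\<forall>e\<in>M. \<forall>e'\<in>M. e \<noteq> e' \<longrightarrow> {x e, y e} \<inter> {x e', y e'} = {}"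
  shows "\<exists>W. (\<forall>e\<in>M. benes_route (Suc n) (out_index (fst (x e))) (out_index (fst (x e))) (W e True)
              \<and> benes_route (Suc n) (out_index (fst (y e))) (out_index (fst (x e))) (W e False))
          \<and> (\<forall>u. (\<Sum>e\<in>M. count_list (W e True) u + count_list (W e False) u) \<le> 2 * d)"
proof -
  define P where "P = M \<times> (UNIV :: bool set)"
  define endpoint where "endpoint p = (if snd p then x (fst p) else y (fst p))" for p
  define oa where "oa p = out_index (fst (endpoint p))" for p
  define ia where "ia p = out_index (fst (x (fst p)))" for p :: "'e \<times> bool"
  have "finite P" unfolding P_def using assms(1) by simp
  have x_out: "x e \<in> {BOut (out_index (fst (x e)))} \<times> {1..d}"
    and y_out: "y e \<in> {BOut (out_index (fst (y e)))} \<times> {1..d}" if "e \<in> M" for e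
    using ends that by auto
  have "\<forall>p\<in>P. oa p \<in> {1..2 ^ Suc n} \<and> ia p \<in> {1..2 ^ Suc n}"
    using ends unfolding P_def oa_def ia_def endpoint_def by auto
  moreover have "card {p\<in>P. oa p = a} \<le> 2 * d" for a
  proof -
    have "inj_on endpoint P"
      unfolding endpoint_def P_def using distinct_ends disjoint_ends by (rule inj_on_pair_endpoints)
    moreover have "endpoint ` {p\<in>P. oa p = a} \<subseteq> {BOut a} \<times> {1..d}"
    proof (rule image_subsetI)
      fix p assume "p \<in> {p\<in>P. oa p = a}"
      then show "endpoint p \<in> {BOut a} \<times> {1..d}"
        using x_out[of "fst p"] y_out[of "fst p"] unfolding P_def oa_def endpoint_def
        by (cases "snd p") (simp_all add: mem_Times_iff)
    qed
    ultimately have "card {p\<in>P. oa p = a} \<le> card ({BOut a} \<times> {1..d})"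
      by (intro card_inj_on_le[OF inj_on_subset]) auto
    then show ?thesis by simp
  qed
  moreover have "card {p\<in>P. ia p = k} \<le> 2 * d" for k
  proof -
    have "inj_on (\<lambda>p. (x (fst p), snd p)) P"
      using disjoint_ends unfolding P_def inj_on_def by fastforce
    moreover have "(\<lambda>p. (x (fst p), snd p)) ` {p\<in>P. ia p = k} \<subseteq> ({BOut k} \<times> {1..d}) \<times> UNIV"
      using x_out unfolding P_def ia_def by (simp add: image_subset_iff mem_Times_iff) metis
    ultimately have "card {p\<in>P. ia p = k} \<le> card (({BOut k} \<times> {1..d}) \<times> (UNIV :: bool set))"
      by (intro card_inj_on_le[OF inj_on_subset]) auto
    then show ?thesis by (simp add: card_cartesian_product)
  qed
  ultimately obtain W where W: "\<forall>p\<in>P. benes_route (Suc n) (oa p) (ia p) (W p)"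
    and load: "\<forall>u. (\<Sum>p\<in>P. count_list (W p) u) \<le> 2 * d"
    using benes_routing[OF \<open>finite P\<close>] by blast
  have "(\<Sum>e\<in>M. count_list (W (e, True)) u + count_list (W (e, False)) u) = (\<Sum>p\<in>P. count_list (W p) u)" for u
    unfolding P_def using assms(1) by (simp add: sum.cartesian_product' UNIV_bool add.commute)
  moreover have "benes_route (Suc n) (out_index (fst (x e))) (out_index (fst (x e))) (W (e, True))
      \<and> benes_route (Suc n) (out_index (fst (y e))) (out_index (fst (x e))) (W (e, False))" if "e \<in> M" for e
    using W[rule_format, of "(e, True)"] W[rule_format, of "(e, False)"] that
    unfolding P_def oa_def ia_def endpoint_def by simp
  ultimately show ?thesis using load by (intro exI[of _ "\<lambda>e b. W (e, b)"]) auto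
qed

lemma matching_on_endpoints:
  assumes "matching_on M X"
  obtains x y where "\<forall>e\<in>M. e = {x e, y e}" "\<forall>e\<in>M. x e \<noteq> y e" "\<forall>e\<in>M. x e \<in> X \<and> y e \<in> X"
    and "\<forall>e\<in>M. \<forall>e'\<in>M. e \<noteq> e' \<longrightarrow> {x e, y e} \<inter> {x e', y e'} = {}"
proof -
  have "\<forall>e\<in>M. \<exists>p. e = {fst p, snd p} \<and> fst p \<noteq> snd p \<and> fst p \<in> X \<and> snd p \<in> X"
    using assms unfolding matching_on_def by (metis fst_conv snd_conv)
  then obtain p where p: "\<forall>e\<in>M. e = {fst (p e), snd (p e)} \<and> fst (p e) \<noteq> snd (p e) \<and> fst (p e) \<in> X \<and> snd (p e) \<in> X"
    by (rule bchoice[THEN exE])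
  show thesis
  proof (rule that[of "\<lambda>e. fst (p e)" "\<lambda>e. snd (p e)"])
    show "\<forall>e\<in>M. \<forall>e'\<in>M. e \<noteq> e' \<longrightarrow> {fst (p e), snd (p e)} \<inter> {fst (p e'), snd (p e')} = {}"
    proof (intro ballI impI)
      fix e e' assume "e \<in> M" "e' \<in> M" "e \<noteq> e'"
      then have "e \<inter> e' = {}" using assms unfolding matching_on_def by blast
      moreover have "{fst (p e), snd (p e)} = e" "{fst (p e'), snd (p e')} = e'"
        using p \<open>e \<in> M\<close> \<open>e' \<in> M\<close> by blast+
      ultimately show "{fst (p e), snd (p e)} \<inter> {fst (p e'), snd (p e')} = {}" by (simp only:)
    qed
  qed (use p in blast)+
qed

lemma finite_matching_on: "matching_on M X \<Longrightarrow> finite X \<Longrightarrow> finite M"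
  unfolding matching_on_def by (rule finite_subset[of M "Pow X"]) auto

lemma matching_on_subset: "matching_on M X \<Longrightarrow> X \<subseteq> Y \<Longrightarrow> matching_on M Y"
  unfolding matching_on_def by (meson subsetD)

lemma matching_linked_subset: "matching_linked V E Y \<Longrightarrow> X \<subseteq> Y \<Longrightarrow> matching_linked V E X"
  unfolding matching_linked_def using matching_on_subset by blast

lemma benes_outputs_disjoint_paths:
  fixes x y :: "'e \<Rightarrow> bvert \<times> nat" and n t :: nat
  defines "Y \<equiv> BOut ` {1..2 ^ Suc n} \<times> {1..t div 2}"
  assumes "finite M" and ends: "\<forall>e\<in>M. x e \<in> Y \<and> y e \<in> Y" and ends_ne: "\<forall>e\<in>M. x e \<noteq> y e"
    and disjoint_ends: "\<forall>e\<in>M. \<forall>e'\<in>M. e \<noteq> e' \<longrightarrow> {x e, y e} \<inter> {x e', y e'} = {}"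
  shows "\<exists>P. (\<forall>e\<in>M. is_path (blowup_V (aug_benes_V (Suc n)) t)
                (blowup_E (aug_benes_E (Suc n)) (aug_benes_V (Suc n)) t) (P e) (x e) (y e))
             \<and> (\<forall>e\<in>M. \<forall>e'\<in>M. e \<noteq> e' \<longrightarrow> set (P e) \<inter> set (P e') = {})"
proof -
  let ?S = "BOut ` {1..2 ^ Suc n}"
  obtain W where W: "\<forall>e\<in>M. benes_route (Suc n) (out_index (fst (x e))) (out_index (fst (x e))) (W e True)
        \<and> benes_route (Suc n) (out_index (fst (y e))) (out_index (fst (x e))) (W e False)"
    and load: "\<forall>u. (\<Sum>e\<in>M. count_list (W e True) u + count_list (W e False) u) \<le> 2 * (t div 2)"
    using benes_matching_routes[OF \<open>finite M\<close> ends[unfolded Y_def] ends_ne disjoint_ends] by blast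
  define mid where "mid e = tl (W e True) @ rev (butlast (tl (W e False)))" for e
  show ?thesis
  proof (rule blowup_disjoint_paths[OF \<open>finite M\<close>, where S = ?S])
    show "\<forall>e\<in>M. successively (\<lambda>a b. {a, b} \<in> aug_benes_E (Suc n)) (fst (x e) # mid e @ [fst (y e)])"
    proof
      fix e assume e: "e \<in> M"
      have out: "BOut (out_index (fst (x e))) = fst (x e)" "BOut (out_index (fst (y e))) = fst (y e)"
        using ends e unfolding Y_def by auto
      have "benes_route (Suc n) (out_index (fst (x e))) (out_index (fst (x e))) (W e True)"
        "benes_route (Suc n) (out_index (fst (y e))) (out_index (fst (x e))) (W e False)"
        using W e by blast+
      from benes_route_join(1)[OF this]
      have "successively (\<lambda>a b. {a, b} \<in> benes_E (Suc n)) (fst (x e) # mid e @ [fst (y e)])"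
        unfolding mid_def by (simp only: out)
      then show "successively (\<lambda>a b. {a, b} \<in> aug_benes_E (Suc n)) (fst (x e) # mid e @ [fst (y e)])"
        by (rule successively_mono) (simp add: aug_benes_E_def)
    qed
    show "?S \<subseteq> aug_benes_V (Suc n)"
      using benes_V_terminals(1) unfolding aug_benes_V_def by blast
    show "\<forall>e\<in>M. set (mid e) \<subseteq> aug_benes_V (Suc n) - ?S"
      using benes_route_join(2) W unfolding mid_def aug_benes_V_def by blast
    have "Y \<subseteq> ?S \<times> {1..t}" unfolding Y_def by auto
    then show "\<forall>e\<in>M. x e \<in> ?S \<times> {1..t} \<and> y e \<in> ?S \<times> {1..t}"
      using ends by blast
    show "\<forall>u. (\<Sum>e\<in>M. count_list (mid e) u) \<le> t"
    proof
      fix u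
      have "(\<Sum>e\<in>M. count_list (mid e) u) \<le> (\<Sum>e\<in>M. count_list (W e True) u + count_list (W e False) u)"
        using benes_route_join(3) W unfolding mid_def by (intro sum_mono) blast
      also have "\<dots> \<le> 2 * (t div 2)" using load by blast
      also have "\<dots> \<le> t" by simp
      finally show "(\<Sum>e\<in>M. count_list (mid e) u) \<le> t" .
    qed
  qed (fact ends_ne disjoint_ends)+
qed

lemma benes_outputs_matching_linked:
  "matching_linked (blowup_V (aug_benes_V (Suc n)) t) (blowup_E (aug_benes_E (Suc n)) (aug_benes_V (Suc n)) t)
     (BOut ` {1..2 ^ Suc n} \<times> {1..t div 2})"
  unfolding matching_linked_def
proof (intro allI impI)
  fix M assume M: "matching_on M (BOut ` {1..2 ^ Suc n} \<times> {1..t div 2})"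
  obtain x y where pairs: "\<forall>e\<in>M. e = {x e, y e}" and ends_ne: "\<forall>e\<in>M. x e \<noteq> y e"
    and ends: "\<forall>e\<in>M. x e \<in> BOut ` {1..2 ^ Suc n} \<times> {1..t div 2} \<and> y e \<in> BOut ` {1..2 ^ Suc n} \<times> {1..t div 2}"
    and disjoint_ends: "\<forall>e\<in>M. \<forall>e'\<in>M. e \<noteq> e' \<longrightarrow> {x e, y e} \<inter> {x e', y e'} = {}"
    by (rule matching_on_endpoints[OF M])
  have "finite M" using finite_matching_on[OF M] by simp
  then obtain P where paths: "\<forall>e\<in>M. is_path (blowup_V (aug_benes_V (Suc n)) t)
        (blowup_E (aug_benes_E (Suc n)) (aug_benes_V (Suc n)) t) (P e) (x e) (y e)"
    and disjoint: "\<forall>e\<in>M. \<forall>e'\<in>M. e \<noteq> e' \<longrightarrow> set (P e) \<inter> set (P e') = {}"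
    using benes_outputs_disjoint_paths[OF _ ends ends_ne disjoint_ends] by blast
  show "\<exists>P. (\<forall>e\<in>M. \<exists>a b. e = {a, b} \<and> is_path (blowup_V (aug_benes_V (Suc n)) t)
          (blowup_E (aug_benes_E (Suc n)) (aug_benes_V (Suc n)) t) (P e) a b)
      \<and> (\<forall>e\<in>M. \<forall>e'\<in>M. e \<noteq> e' \<longrightarrow> set (P e) \<inter> set (P e') = {})"
  proof (intro exI[of _ P] conjI ballI)
    fix e assume "e \<in> M"
    then have "e = {x e, y e}" "is_path (blowup_V (aug_benes_V (Suc n)) t)
        (blowup_E (aug_benes_E (Suc n)) (aug_benes_V (Suc n)) t) (P e) (x e) (y e)"
      using pairs paths by blast+
    then show "\<exists>a b. e = {a, b} \<and> is_path (blowup_V (aug_benes_V (Suc n)) t)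
        (blowup_E (aug_benes_E (Suc n)) (aug_benes_V (Suc n)) t) (P e) a b"
      by (intro exI[of _ "x e"] exI[of _ "y e"] conjI)
  qed (use disjoint in blast)
qed

lemma linkage_capacity_lower_bound:
  assumes "c > 0"
    and "\<forall>t\<ge>T. \<exists>X. X \<subseteq> blowup_V V t \<and> card X = nat \<lfloor>c * real t\<rfloor> \<and> matching_linked (blowup_V V t) (blowup_E E V t) X"
  shows "ereal c \<le> linkage_capacity V E"
  unfolding linkage_capacity_def using assms by (intro SUP_upper) blast

lemma nat_floor_third_le:
  fixes s t :: nat
  assumes "t \<ge> 2"
  shows "nat \<lfloor>real s / 3 * real t\<rfloor> \<le> s * (t div 2)"
proof -
  have "t \<le> 3 * (t div 2)" using assms by linarith
  then have "real t \<le> real (3 * (t div 2))" by (simp only: of_nat_le_iff)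
  then have "real s / 3 * real t \<le> real s / 3 * real (3 * (t div 2))"
    by (intro mult_left_mono) simp_all
  also have "\<dots> = real (s * (t div 2))" by simp
  finally show ?thesis by linarith
qed

theorem mainTheorem10:
  fixes l :: nat
  assumes "l \<ge> 1"
  shows "linkage_capacity (aug_benes_V l) (aug_benes_E l) \<ge> ereal (2 ^ l / 3)"
proof -
  obtain n where l: "l = Suc n" using assms by (cases l) auto
  have "\<exists>X. X \<subseteq> blowup_V (aug_benes_V l) t \<and> card X = nat \<lfloor>2 ^ l / 3 * real t\<rfloor>
      \<and> matching_linked (blowup_V (aug_benes_V l) t) (blowup_E (aug_benes_E l) (aug_benes_V l) t) X"
    if "t \<ge> 2" for t
  proof -
    let ?Y = "BOut ` {1..2 ^ l} \<times> {1..t div 2}"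
    have "card (BOut ` {1..2 ^ l}) = 2 ^ l" by (subst card_image) (auto simp: inj_on_def)
    then have card_Y: "card ?Y = 2 ^ l * (t div 2)" by (simp add: card_cartesian_product)
    have "nat \<lfloor>2 ^ l / 3 * real t\<rfloor> \<le> card ?Y"
      unfolding card_Y using nat_floor_third_le[OF that, of "2 ^ l"] by simp
    then obtain X where X: "X \<subseteq> ?Y" "card X = nat \<lfloor>2 ^ l / 3 * real t\<rfloor>"
      by (meson obtain_subset_with_card_n)
    have "?Y \<subseteq> blowup_V (aug_benes_V l) t"
      unfolding blowup_V_def aug_benes_V_def l
      by (intro Sigma_mono image_subsetI benes_V_terminals(1)) auto
    moreover have "matching_linked (blowup_V (aug_benes_V l) t) (blowup_E (aug_benes_E l) (aug_benes_V l) t) X"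
      using benes_outputs_matching_linked X(1) unfolding l by (rule matching_linked_subset)
    ultimately show ?thesis using X by blast
  qed
  then show ?thesis by (intro linkage_capacity_lower_bound) auto
qed

end
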